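(* Let $a,\phi\ge0$ with $\langle a\rangle:=\int_{\mathbb{R}^d}a>0$, $\langle\phi\rangle:=\int_{\mathbb{R}^d}\phi>0$, and $m,\lambda>0$. A constant function $\rho_t(x)\equiv\rho>0$ is a stationary solution of $\partial_t\rho_t=-\rho_t(a*\rho_t)-m\rho_te^{-(\phi*\rho_t)}+\lambda$ if and only if $\lambda=\langle a\rangle\rho^2+m\rho e^{-\langle\phi\rangle\rho}$. Moreover: if $$\frac{\langle a\rangle}{m\langle\phi\rangle}<\frac{3-\sqrt5}{4}\exp\Bigl(-\frac{1+\sqrt5}{2}\Bigr),$$ then there exists $\lambda>0$ for which the equation $\lambda=\langle a\rangle\rho^2+m\rho e^{-\langle\phi\rangle\rho}$ has exactly three positive solutions $\rho$; if the reverse (non-strict) inequality $\frac{\langle a\rangle}{m\langle\phi\rangle}\ge\frac{3-\sqrt5}{4}\exp\bigl(-\frac{1+\sqrt5}{2}\bigr)$ holds, then for every $\lambda>0$ this equation has exactly one positive solution.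
   Context: $*$ denotes convolution on $\mathbb{R}^d$; $a,\phi\in L^1(\mathbb{R}^d)\cap L^\infty(\mathbb{R}^d)$ are nonnegative. *)

theory Defs
  imports "HOL-Analysis.Analysis"
begin

definition conv :: "('d::euclidean_space \<Rightarrow> real) \<Rightarrow> ('d \<Rightarrow> real) \<Rightarrow> 'd \<Rightarrow> real" where
  "conv f g x = (LINT y|lborel. f (x - y) * g y)"

definition mass :: "('d::euclidean_space \<Rightarrow> real) \<Rightarrow> real" where
  "mass f = (LINT x|lborel. f x)"

definition L1_Linf :: "('d::euclidean_space \<Rightarrow> real) \<Rightarrow> bool" where
  "L1_Linf f \<longleftrightarrow> integrable lborel f \<and> (\<exists>B. AE x in lborel. \<bar>f x\<bar> \<le> B)"

definition stationary :: "('d::euclidean_space \<Rightarrow> real) \<Rightarrow> ('d \<Rightarrow> real) \<Rightarrow> real \<Rightarrow> real \<Rightarrow> ('d \<Rightarrow> real) \<Rightarrow> bool" where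
  "stationary a \<phi> m lam \<rho> \<longleftrightarrow>
     (\<forall>x. - \<rho> x * conv a \<rho> x - m * \<rho> x * exp (- conv \<phi> \<rho> x) + lam = 0)"

end

theory Submission
  imports Defs "HOL-Real_Asymp.Real_Asymp"
begin

text \<open>For an integrable kernel, convolution with a constant \<open>\<rho>\<close> is the constant \<open>\<langle>a\<rangle>\<rho>\<close>, so
  stationarity of \<open>\<rho>\<close> becomes a scalar equation. The substitution \<open>s = \<langle>\<phi>\<rangle>\<rho>\<close> turns it into
  \<open>k s\<^sup>2 + s e\<^sup>-\<^sup>s = c\<close> with \<open>k = \<langle>a\<rangle> / (m\<langle>\<phi>\<rangle>)\<close>. The derivative of the left-hand side is
  \<open>2s (k - h s)\<close> where \<open>h s = (s - 1) e\<^sup>-\<^sup>s / (2s)\<close> increases up to the golden ratio \<open>\<phi>\<^sub>g\<close> and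
  then decreases to \<open>0\<close>. If \<open>k \<ge> h \<phi>\<^sub>g\<close> the left-hand side is strictly increasing, so every
  level \<open>c > 0\<close> is attained once; if \<open>k < h \<phi>\<^sub>g\<close> it increases, decreases and increases again
  between the two solutions of \<open>h s = k\<close>, and a level between the local minimum and the local
  maximum is attained three times.\<close>

lemma conv_const_right:
  fixes f :: "'d::euclidean_space \<Rightarrow> real"
  assumes "integrable lborel f"
  shows "conv f (\<lambda>_. r) x = r * mass f"
proof -
  have reflect: "distr lborel borel (\<lambda>y. x + (-1::real) *\<^sub>R y) = (lborel :: 'd measure)"
    using lborel_affine[of "-1::real" x] by (simp add: density_1)
  have "f \<in> borel_measurable borel"
    using assms by (simp add: borel_measurable_integrable)
  then have "mass f = (LINT y|lborel. f (x + (-1::real) *\<^sub>R y))"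
    unfolding mass_def by (subst reflect[symmetric]) (rule integral_distr, auto)
  then show ?thesis
    unfolding conv_def by (simp add: mult.commute)
qed

lemma stationary_const_iff:
  assumes "integrable lborel a" and "integrable lborel \<phi>"
  shows "stationary a \<phi> m lam (\<lambda>_. \<rho>) \<longleftrightarrow>
    lam = mass a * \<rho>\<^sup>2 + m * \<rho> * exp (- mass \<phi> * \<rho>)"
  unfolding stationary_def conv_const_right[OF assms(1)] conv_const_right[OF assms(2)]
  by (auto simp: algebra_simps power2_eq_square)

lemma filterlim_at_top_exceeds:
  fixes f :: "real \<Rightarrow> real"
  assumes "filterlim f at_top at_top"
  shows "\<exists>T\<ge>a. c < f T"
proof -
  have "eventually (\<lambda>x. c < f x \<and> a \<le> x) at_top"
    using assms eventually_ge_at_top[of a] unfolding filterlim_at_top_dense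
    by (intro eventually_conj) auto
  then show ?thesis
    by (auto dest: eventually_happens)
qed

lemma card_level_set_strict_mono_on:
  fixes f :: "real \<Rightarrow> real"
  assumes cont: "continuous_on {0..} f" and mono: "strict_mono_on {0..} f"
    and top: "filterlim f at_top at_top" and c: "f 0 < c"
  shows "card {s. 0 < s \<and> f s = c} = 1"
proof -
  obtain T where T: "0 \<le> T" "c < f T"
    using filterlim_at_top_exceeds[OF top] by blast
  then obtain r where r: "0 \<le> r" "f r = c"
    using IVT'[of f 0 c T] c continuous_on_subset[OF cont, of "{0..T}"] by auto
  have "s = r" if "0 < s" "f s = c" for s
    using strict_mono_on_eqD[OF mono, of r s] that r by simp
  then have "{s. 0 < s \<and> f s = c} = {r}"
    using r c by (auto simp: order.order_iff_strict)
  then show ?thesis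
    by simp
qed

lemma card_level_set_up_down_up:
  fixes f :: "real \<Rightarrow> real"
  assumes cont: "continuous_on {0..} f" and s: "0 < s\<^sub>1" "s\<^sub>1 < s\<^sub>2"
    and up\<^sub>1: "strict_mono_on {0..s\<^sub>1} f" and down: "strict_antimono_on {s\<^sub>1..s\<^sub>2} f"
    and up\<^sub>2: "strict_mono_on {s\<^sub>2..} f" and top: "filterlim f at_top at_top"
    and c: "f 0 < c" "f s\<^sub>2 < c" "c < f s\<^sub>1"
  shows "card {s. 0 < s \<and> f s = c} = 3"
proof -
  have cont': "continuous_on {x..y} f" if "0 \<le> x" for x y
    using that by (auto intro: continuous_on_subset[OF cont])
  obtain T where T: "s\<^sub>2 \<le> T" "c < f T"
    using filterlim_at_top_exceeds[OF top] by blast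
  obtain r\<^sub>1 where r\<^sub>1: "0 < r\<^sub>1" "r\<^sub>1 < s\<^sub>1" "f r\<^sub>1 = c"
    using IVT'[of f 0 c s\<^sub>1] cont' s c by (force simp: order.order_iff_strict)
  obtain r\<^sub>2 where r\<^sub>2: "s\<^sub>1 < r\<^sub>2" "r\<^sub>2 < s\<^sub>2" "f r\<^sub>2 = c"
    using IVT2'[of f s\<^sub>2 c s\<^sub>1] cont' s c by (force simp: order.order_iff_strict)
  obtain r\<^sub>3 where r\<^sub>3: "s\<^sub>2 < r\<^sub>3" "f r\<^sub>3 = c"
    using IVT'[of f s\<^sub>2 c T] cont' s c T by (force simp: order.order_iff_strict)
  have inj: "inj_on f {0..s\<^sub>1}" "inj_on f {s\<^sub>1..s\<^sub>2}" "inj_on f {s\<^sub>2..}"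
    using up\<^sub>1 down up\<^sub>2 strict_antimono_iff_antimono by (auto intro: strict_mono_on_imp_inj_on)
  have "{s. 0 < s \<and> f s = c} = {r\<^sub>1, r\<^sub>2, r\<^sub>3}"
  proof (intro equalityI subsetI)
    fix s assume "s \<in> {s. 0 < s \<and> f s = c}"
    then have "0 < s" "f s = c" by auto
    then consider "s \<in> {0..s\<^sub>1}" "f s = f r\<^sub>1" | "s \<in> {s\<^sub>1..s\<^sub>2}" "f s = f r\<^sub>2" | "s \<in> {s\<^sub>2..}" "f s = f r\<^sub>3"
      using r\<^sub>1 r\<^sub>2 r\<^sub>3 by force
    then show "s \<in> {r\<^sub>1, r\<^sub>2, r\<^sub>3}"
      by cases (use inj r\<^sub>1 r\<^sub>2 r\<^sub>3 in \<open>auto dest: inj_onD\<close>)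
  qed (use r\<^sub>1 r\<^sub>2 r\<^sub>3 s in auto)
  then show ?thesis
    using r\<^sub>1 r\<^sub>2 r\<^sub>3 by simp
qed

definition loss_rate :: "real \<Rightarrow> real \<Rightarrow> real"
  where "loss_rate k s = k * s\<^sup>2 + s * exp (- s)"

text \<open>\<open>critical_coeff s\<close> is the coefficient \<open>k\<close> for which \<open>s\<close> is a critical point of \<open>loss_rate k\<close>.\<close>

definition critical_coeff :: "real \<Rightarrow> real"
  where "critical_coeff s = (s - 1) * exp (- s) / (2 * s)"

lemma card_positive_roots_rescale:
  assumes "0 < P" and "0 < m"
  shows "card {\<rho>. \<rho> > 0 \<and> lam = A * \<rho>\<^sup>2 + m * \<rho> * exp (- P * \<rho>)}
    = card {s. 0 < s \<and> loss_rate (A / (m * P)) s = lam * P / m}"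
proof -
  have "loss_rate (A / (m * P)) (P * \<rho>) = P / m * (A * \<rho>\<^sup>2 + m * \<rho> * exp (- P * \<rho>))" for \<rho>
    using assms by (simp add: loss_rate_def field_simps power2_eq_square)
  then have scaled_iff: "loss_rate (A / (m * P)) (P * \<rho>) = lam * P / m
      \<longleftrightarrow> lam = A * \<rho>\<^sup>2 + m * \<rho> * exp (- P * \<rho>)" for \<rho>
    using assms by auto
  have "{s. 0 < s \<and> loss_rate (A / (m * P)) s = lam * P / m}
      = (\<lambda>\<rho>. P * \<rho>) ` {\<rho>. \<rho> > 0 \<and> lam = A * \<rho>\<^sup>2 + m * \<rho> * exp (- P * \<rho>)}"
  proof (intro equalityI subsetI)
    fix s assume "s \<in> {s. 0 < s \<and> loss_rate (A / (m * P)) s = lam * P / m}"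
    then show "s \<in> (\<lambda>\<rho>. P * \<rho>) ` {\<rho>. \<rho> > 0 \<and> lam = A * \<rho>\<^sup>2 + m * \<rho> * exp (- P * \<rho>)}"
      using assms scaled_iff[of "s / P"] by (intro image_eqI[of _ _ "s / P"]) auto
  qed (use assms scaled_iff in auto)
  moreover have "inj_on (\<lambda>\<rho>. P * \<rho>) X" for X
    using assms by (auto simp: inj_on_def)
  ultimately show ?thesis
    by (simp add: card_image)
qed

lemma loss_rate_deriv:
  assumes "0 < s"
  shows "(loss_rate k has_real_derivative 2 * s * (k - critical_coeff s)) (at s)"
proof -
  have "(loss_rate k has_real_derivative 2 * k * s + (1 - s) * exp (- s)) (at s)"
    unfolding loss_rate_def by (auto intro!: derivative_eq_intros simp: field_simps power2_eq_square)
  moreover have "2 * k * s + (1 - s) * exp (- s) = 2 * s * (k - critical_coeff s)"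
    using assms by (simp add: critical_coeff_def field_simps)
  ultimately show ?thesis
    by simp
qed

lemma continuous_on_loss_rate: "continuous_on A (loss_rate k)"
  unfolding loss_rate_def by (intro continuous_intros)

lemma loss_rate_0: "loss_rate k 0 = 0"
  by (simp add: loss_rate_def)

lemma loss_rate_pos: "0 < k \<Longrightarrow> 0 < s \<Longrightarrow> 0 < loss_rate k s"
  unfolding loss_rate_def by (intro add_pos_pos) auto

lemma filterlim_loss_rate_at_top: "0 < k \<Longrightarrow> filterlim (loss_rate k) at_top at_top"
  unfolding loss_rate_def by real_asymp

lemma loss_rate_less:
  assumes "0 \<le> x" "x < y" and "\<And>t. x < t \<Longrightarrow> t < y \<Longrightarrow> critical_coeff t < k"
  shows "loss_rate k x < loss_rate k y"
proof (rule DERIV_pos_imp_increasing_open[OF \<open>x < y\<close> _ continuous_on_loss_rate])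
  fix t assume "x < t" "t < y"
  then show "\<exists>d. (loss_rate k has_real_derivative d) (at t) \<and> 0 < d"
    using assms loss_rate_deriv[of t k] by (intro exI conjI) auto
qed

lemma loss_rate_greater:
  assumes "0 \<le> x" "x < y" and "\<And>t. x < t \<Longrightarrow> t < y \<Longrightarrow> k < critical_coeff t"
  shows "loss_rate k y < loss_rate k x"
proof (rule DERIV_neg_imp_decreasing_open[OF \<open>x < y\<close> _ continuous_on_loss_rate])
  fix t assume "x < t" "t < y"
  then show "\<exists>d. (loss_rate k has_real_derivative d) (at t) \<and> d < 0"
    using assms loss_rate_deriv[of t k] by (intro exI conjI) (auto simp: mult_pos_neg)
qed

definition golden_ratio :: real
  where "golden_ratio = (1 + sqrt 5) / 2"

lemma sqrt_5_bounds: "2 < sqrt (5::real)" "sqrt (5::real) < 3"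
  by (auto intro: real_less_rsqrt real_less_lsqrt)

lemma golden_ratio_gt_1: "1 < golden_ratio"
  using sqrt_5_bounds unfolding golden_ratio_def by simp

lemma critical_coeff_golden_ratio:
  "critical_coeff golden_ratio = (3 - sqrt 5) / 4 * exp (- (1 + sqrt 5) / 2)"
proof -
  have "(golden_ratio - 1) / (2 * golden_ratio) = (3 - sqrt 5) / 4"
    unfolding golden_ratio_def using sqrt_5_bounds by (simp add: field_simps)
  then show ?thesis
    unfolding critical_coeff_def
    by (metis golden_ratio_def minus_divide_left times_divide_eq_left mult.commute)
qed

lemma critical_coeff_deriv:
  assumes "0 < s"
  shows "(critical_coeff has_real_derivative exp (- s) * (1 + s - s\<^sup>2) / (2 * s\<^sup>2)) (at s)"
  unfolding critical_coeff_def using assms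
  by (auto intro!: derivative_eq_intros simp: field_simps power2_eq_square)

lemma isCont_critical_coeff: "0 < s \<Longrightarrow> isCont critical_coeff s"
  using critical_coeff_deriv DERIV_isCont by blast

lemma continuous_on_critical_coeff: "0 < x \<Longrightarrow> continuous_on {x..y} critical_coeff"
  by (intro continuous_at_imp_continuous_on ballI isCont_critical_coeff) auto

lemma golden_quadratic_factor:
  "1 + s - s\<^sup>2 = - ((s - golden_ratio) * (s - (1 - sqrt 5) / 2))"
  unfolding golden_ratio_def by (simp add: field_simps power2_eq_square)

lemma golden_quadratic_pos: "0 < s \<Longrightarrow> s < golden_ratio \<Longrightarrow> 0 < 1 + s - s\<^sup>2"
  unfolding golden_quadratic_factor using sqrt_5_bounds
  by (intro neg_0_less_iff_less[THEN iffD2] mult_neg_pos) auto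

lemma golden_quadratic_neg: "golden_ratio < s \<Longrightarrow> 1 + s - s\<^sup>2 < 0"
  unfolding golden_quadratic_factor using sqrt_5_bounds golden_ratio_gt_1
  by (intro neg_less_0_iff_less[THEN iffD2] mult_pos_pos) auto

lemma critical_coeff_increasing:
  assumes "0 < x" "x < y" "y \<le> golden_ratio"
  shows "critical_coeff x < critical_coeff y"
proof (rule DERIV_pos_imp_increasing_open[OF \<open>x < y\<close> _ continuous_on_critical_coeff[OF \<open>0 < x\<close>]])
  fix t assume "x < t" "t < y"
  then have "0 < exp (- t) * (1 + t - t\<^sup>2) / (2 * t\<^sup>2)"
    using assms golden_quadratic_pos[of t] by (intro divide_pos_pos mult_pos_pos) auto
  then show "\<exists>d. (critical_coeff has_real_derivative d) (at t) \<and> 0 < d"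
    using assms \<open>x < t\<close> critical_coeff_deriv[of t] by auto
qed

lemma critical_coeff_decreasing:
  assumes "golden_ratio \<le> x" "x < y"
  shows "critical_coeff y < critical_coeff x"
proof (rule DERIV_neg_imp_decreasing_open[OF \<open>x < y\<close>])
  fix t assume "x < t" "t < y"
  then have "exp (- t) * (1 + t - t\<^sup>2) / (2 * t\<^sup>2) < 0"
    using assms golden_ratio_gt_1 golden_quadratic_neg[of t] by (intro divide_neg_pos mult_pos_neg) auto
  then show "\<exists>d. (critical_coeff has_real_derivative d) (at t) \<and> d < 0"
    using assms golden_ratio_gt_1 \<open>x < t\<close> critical_coeff_deriv[of t] by auto
qed (use assms golden_ratio_gt_1 in \<open>auto intro: continuous_on_critical_coeff\<close>)

lemma critical_coeff_less_max:
  "0 < s \<Longrightarrow> s \<noteq> golden_ratio \<Longrightarrow> critical_coeff s < critical_coeff golden_ratio"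
  using critical_coeff_increasing[of s golden_ratio] critical_coeff_decreasing[of golden_ratio s]
  by (cases "s < golden_ratio") auto

lemma critical_coeff_level_points:
  assumes "0 < k" "k < critical_coeff golden_ratio"
  obtains s\<^sub>1 s\<^sub>2 where "1 \<le> s\<^sub>1" "s\<^sub>1 < golden_ratio" "golden_ratio < s\<^sub>2"
    "critical_coeff s\<^sub>1 = k" "critical_coeff s\<^sub>2 = k"
proof -
  have "critical_coeff 1 = 0"
    by (simp add: critical_coeff_def)
  then obtain s\<^sub>1 where s\<^sub>1: "1 \<le> s\<^sub>1" "s\<^sub>1 \<le> golden_ratio" "critical_coeff s\<^sub>1 = k"
    using IVT'[of critical_coeff 1 k golden_ratio] assms golden_ratio_gt_1
      continuous_on_critical_coeff[of 1 golden_ratio] by auto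
  have "(critical_coeff \<longlongrightarrow> 0) at_top"
    unfolding critical_coeff_def by real_asymp
  then have "eventually (\<lambda>s. critical_coeff s < k \<and> golden_ratio \<le> s) at_top"
    using assms(1) by (intro eventually_conj order_tendstoD(2) eventually_ge_at_top) auto
  then obtain S where "golden_ratio \<le> S" "critical_coeff S < k"
    by (auto dest: eventually_happens)
  then obtain s\<^sub>2 where s\<^sub>2: "golden_ratio \<le> s\<^sub>2" "critical_coeff s\<^sub>2 = k"
    using IVT2'[of critical_coeff S k golden_ratio] assms golden_ratio_gt_1
      continuous_on_critical_coeff[of golden_ratio S] by auto
  have "s\<^sub>1 \<noteq> golden_ratio" "s\<^sub>2 \<noteq> golden_ratio"
    using s\<^sub>1 s\<^sub>2 assms(2) by auto
  then show thesis
    using that s\<^sub>1 s\<^sub>2 by (simp add: order.order_iff_strict)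
qed

lemma strict_mono_on_loss_rate:
  assumes "critical_coeff golden_ratio \<le> k"
  shows "strict_mono_on {0..} (loss_rate k)"
proof (rule strict_mono_onI)
  \<comment> \<open>When \<open>k = critical_coeff golden_ratio\<close> the derivative vanishes at the golden ratio,
    so intervals are split there.\<close>
  have less: "loss_rate k x < loss_rate k y"
    if "0 \<le> x" "x < y" "\<not> (x < golden_ratio \<and> golden_ratio < y)" for x y
  proof (rule loss_rate_less[OF that(1,2)])
    fix t assume "x < t" "t < y"
    then have "0 < t" "t \<noteq> golden_ratio"
      using that by auto
    then show "critical_coeff t < k"
      using critical_coeff_less_max[of t] assms by linarith
  qed
  fix x y :: real assume "x \<in> {0..}" "y \<in> {0..}" "x < y"
  then show "loss_rate k x < loss_rate k y"
  proof (cases "x < golden_ratio \<and> golden_ratio < y")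
    case True
    then show ?thesis
      using less[of x golden_ratio] less[of golden_ratio y] \<open>x \<in> {0..}\<close> by force
  qed (use less in auto)
qed

lemma card_loss_rate_level_supercritical:
  assumes "critical_coeff golden_ratio \<le> k" and "0 < c"
  shows "card {s. 0 < s \<and> loss_rate k s = c} = 1"
proof -
  have "critical_coeff 1 < critical_coeff golden_ratio"
    using critical_coeff_less_max[of 1] golden_ratio_gt_1 by simp
  then have "0 < k"
    using assms(1) by (simp add: critical_coeff_def)
  then show ?thesis
    using assms card_level_set_strict_mono_on[OF continuous_on_loss_rate strict_mono_on_loss_rate
        filterlim_loss_rate_at_top] by (simp add: loss_rate_0)
qed

lemma card_loss_rate_level_subcritical:
  assumes "0 < k" and "k < critical_coeff golden_ratio"
  shows "\<exists>c>0. card {s. 0 < s \<and> loss_rate k s = c} = 3"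
proof -
  obtain s\<^sub>1 s\<^sub>2 where s: "1 \<le> s\<^sub>1" "s\<^sub>1 < golden_ratio" "golden_ratio < s\<^sub>2"
    and k: "critical_coeff s\<^sub>1 = k" "critical_coeff s\<^sub>2 = k"
    using critical_coeff_level_points[OF assms] by blast
  have up\<^sub>1: "strict_mono_on {0..s\<^sub>1} (loss_rate k)"
  proof (intro strict_mono_onI loss_rate_less)
    fix x y t assume "x \<in> {0..s\<^sub>1}" "y \<in> {0..s\<^sub>1}" "x < t" "t < y"
    then show "critical_coeff t < k"
      using s k critical_coeff_increasing[of t s\<^sub>1] by auto
  qed auto
  have down: "strict_antimono_on {s\<^sub>1..s\<^sub>2} (loss_rate k)"
  proof (intro monotone_onI loss_rate_greater)
    fix x y t assume "x \<in> {s\<^sub>1..s\<^sub>2}" "y \<in> {s\<^sub>1..s\<^sub>2}" "x < t" "t < y"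
    then show "k < critical_coeff t"
      using s k critical_coeff_increasing[of s\<^sub>1 t] critical_coeff_decreasing[of t s\<^sub>2]
      by (cases "t \<le> golden_ratio") auto
  qed (use s in auto)
  have up\<^sub>2: "strict_mono_on {s\<^sub>2..} (loss_rate k)"
  proof (intro strict_mono_onI loss_rate_less)
    fix x y t assume "x \<in> {s\<^sub>2..}" "y \<in> {s\<^sub>2..}" "x < t" "t < y"
    then show "critical_coeff t < k"
      using s k critical_coeff_decreasing[of s\<^sub>2 t] by auto
  qed (use s golden_ratio_gt_1 in auto)
  define c where "c = (loss_rate k s\<^sub>1 + loss_rate k s\<^sub>2) / 2"
  have "loss_rate k s\<^sub>2 < loss_rate k s\<^sub>1"
    using down s by (auto simp: monotone_on_def)
  moreover have "0 < loss_rate k s\<^sub>2"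
    using assms s golden_ratio_gt_1 by (intro loss_rate_pos) auto
  ultimately have "0 < c" "loss_rate k 0 < c" "loss_rate k s\<^sub>2 < c" "c < loss_rate k s\<^sub>1"
    by (auto simp: c_def loss_rate_0)
  then show ?thesis
    using s golden_ratio_gt_1 by (intro exI[of _ c] conjI card_level_set_up_down_up[OF continuous_on_loss_rate
        _ _ up\<^sub>1 down up\<^sub>2] filterlim_loss_rate_at_top assms(1)) auto
qed

theorem mainTheorem10:
  fixes a \<phi> :: "'d::euclidean_space \<Rightarrow> real" and m :: real
  assumes "\<And>x. a x \<ge> 0" and "\<And>x. \<phi> x \<ge> 0"
    and "L1_Linf a" and "L1_Linf \<phi>"
    and "mass a > 0" and "mass \<phi> > 0" and "m > 0"
  shows "(\<forall>lam>0. \<forall>\<rho>>0. stationary a \<phi> m lam (\<lambda>x. \<rho>) \<longleftrightarrow>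
              lam = mass a * \<rho>\<^sup>2 + m * \<rho> * exp (- mass \<phi> * \<rho>))
    \<and> (mass a / (m * mass \<phi>) < (3 - sqrt 5) / 4 * exp (- (1 + sqrt 5) / 2) \<longrightarrow>
        (\<exists>lam>0. card {\<rho>::real. \<rho> > 0 \<and> lam = mass a * \<rho>\<^sup>2 + m * \<rho> * exp (- mass \<phi> * \<rho>)} = 3))
    \<and> (mass a / (m * mass \<phi>) \<ge> (3 - sqrt 5) / 4 * exp (- (1 + sqrt 5) / 2) \<longrightarrow>
        (\<forall>lam>0. card {\<rho>::real. \<rho> > 0 \<and> lam = mass a * \<rho>\<^sup>2 + m * \<rho> * exp (- mass \<phi> * \<rho>)} = 1))"
proof (intro conjI allI impI)
  have pos: "0 < mass a" "0 < mass \<phi>" "0 < m"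
    using assms(5-7) .
  note rescale = card_positive_roots_rescale[OF pos(2,3), where A = "mass a"]
  note critical = critical_coeff_golden_ratio[symmetric]
  show "stationary a \<phi> m lam (\<lambda>x. \<rho>) \<longleftrightarrow> lam = mass a * \<rho>\<^sup>2 + m * \<rho> * exp (- mass \<phi> * \<rho>)" for lam \<rho>
    using assms(3,4) by (intro stationary_const_iff) (auto simp: L1_Linf_def)
  show "\<exists>lam>0. card {\<rho>. \<rho> > 0 \<and> lam = mass a * \<rho>\<^sup>2 + m * \<rho> * exp (- mass \<phi> * \<rho>)} = 3"
    if subcritical: "mass a / (m * mass \<phi>) < (3 - sqrt 5) / 4 * exp (- (1 + sqrt 5) / 2)"
  proof -
    obtain c where "0 < c" "card {s. 0 < s \<and> loss_rate (mass a / (m * mass \<phi>)) s = c} = 3"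
      using card_loss_rate_level_subcritical[OF _ subcritical[unfolded critical]] pos by auto
    then show ?thesis
      using pos unfolding rescale by (intro exI[of _ "c * m / mass \<phi>"]) simp
  qed
  show "card {\<rho>. \<rho> > 0 \<and> lam = mass a * \<rho>\<^sup>2 + m * \<rho> * exp (- mass \<phi> * \<rho>)} = 1"
    if "mass a / (m * mass \<phi>) \<ge> (3 - sqrt 5) / 4 * exp (- (1 + sqrt 5) / 2)" and "0 < lam" for lam
    using that pos unfolding rescale critical by (intro card_loss_rate_level_supercritical) auto
qed

end
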